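(* Let $\beta<2$ and set $h(\xi,\alpha)=\sqrt{\xi^2-\beta\xi^4+\xi^6}+\alpha\xi$ for $\xi,\alpha\in\mathbb R$. (i) If $\beta\neq0$, there is $C>0$ such that $\sup_{\alpha\in\mathbb R}\big|\int_{\mathbb R}e^{ith(\xi,\alpha)}\,d\xi\big|\le Ct^{-1/3}$ for all $t>0$. (ii) If $\beta=0$, there is $C>0$ such that $\sup_{\alpha\in\mathbb R}\big|\int_{\mathbb R}e^{ith(\xi,\alpha)}\,d\xi\big|\le C(t^{-1/3}+t^{-1/5})$ for all $t>0$.
   Context: The integrals are oscillatory improper integrals over $\mathbb R$. *)

theory Defs
  imports "HOL-Analysis.Analysis"
begin

definition phase :: "real \<Rightarrow> real \<Rightarrow> real \<Rightarrow> real" where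
  "phase \<beta> \<xi> \<alpha> = sqrt (\<xi>^2 - \<beta> * \<xi>^4 + \<xi>^6) + \<alpha> * \<xi>"

definition has_improper_integral_R :: "(real \<Rightarrow> complex) \<Rightarrow> complex \<Rightarrow> bool" where
  "has_improper_integral_R f I \<longleftrightarrow>
     (\<forall>a b. f integrable_on {a..b}) \<and>
     ((\<lambda>(a, b). integral {a..b} f) \<longlongrightarrow> I) (at_bot \<times>\<^sub>F at_top)"

end

theory Submission
  imports Defs "HOL-Real_Asymp.Real_Asymp"
begin

(* For xi >= 0 the phase is g(xi) + alpha xi with g(xi) = xi sqrt(1 - beta xi^2 + xi^4), and
   xi -> -xi replaces alpha by -alpha, so it suffices to bound the half-line integrals
   int_0^B exp(i t (g(xi) + c xi)) d xi uniformly in B and c.  Van der Corput's lemma bounds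
   such an integral over an interval where g'' has constant sign and |g''| >= m d^j, d the
   distance to an endpoint, by O(t^(-1/(j+2))), uniformly in the linear term c xi.  Here
   g''(xi) = xi M(xi^2) / (1 - beta xi^2 + xi^4)^(3/2) with a cubic M, and [0, oo) splits into
   finitely many such intervals: for beta <> 0 all of them have j <= 1, giving t^(-1/3), while for
   beta = 0 g'' vanishes like 10 xi^3 at the origin, giving t^(-1/5).  Since g' tends to
   infinity, the first derivative test also yields convergence of the improper integral. *)

section \<open>Van der Corput's lemma\<close>

lemma nonneg_derivative_imp_le:
  fixes f f' :: "real \<Rightarrow> real"
  assumes "\<And>z. (f has_real_derivative f' z) (at z)" and "x \<le> y"
    and "\<And>z. x \<le> z \<Longrightarrow> z \<le> y \<Longrightarrow> 0 \<le> f' z"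
  shows "f x \<le> f y"
  by (rule DERIV_nonneg_imp_nondecreasing[OF assms(2)]) (use assms in blast)

lemma norm_integral_cis_le_length:
  fixes \<phi> :: "real \<Rightarrow> real"
  assumes "a \<le> b" and "continuous_on {a..b} \<phi>"
  shows "norm (integral {a..b} (\<lambda>x. cis (\<phi> x))) \<le> b - a"
proof -
  have "(\<lambda>x. cis (\<phi> x)) integrable_on {a..b}"
    by (intro integrable_continuous_interval continuous_intros assms)
  then have "norm (integral {a..b} (\<lambda>x. cis (\<phi> x))) \<le> integral {a..b} (\<lambda>x. 1::real)"
    by (rule integral_norm_bound_integral) auto
  then show ?thesis using assms by simp
qed

lemma cis_has_integral_by_parts:
  fixes \<phi> \<phi>' \<phi>'' :: "real \<Rightarrow> real"
  assumes ab: "a \<le> b"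
    and d1: "\<And>x. (\<phi> has_real_derivative \<phi>' x) (at x)"
    and d2: "\<And>x. (\<phi>' has_real_derivative \<phi>'' x) (at x)"
    and nz: "\<And>x. x \<in> {a..b} \<Longrightarrow> \<phi>' x \<noteq> 0"
  shows "((\<lambda>x. cis (\<phi> x) + \<i> * cis (\<phi> x) * of_real (\<phi>'' x / (\<phi>' x)\<^sup>2)) has_integral
           (\<i> * cis (\<phi> a) / of_real (\<phi>' a) - \<i> * cis (\<phi> b) / of_real (\<phi>' b))) {a..b}"
proof -
  define E where "E x = - \<i> * cis (\<phi> x) * of_real (1 / \<phi>' x)" for x
  have "(E has_vector_derivative (cis (\<phi> x) + \<i> * cis (\<phi> x) * of_real (\<phi>'' x / (\<phi>' x)\<^sup>2)))
          (at x within {a..b})" if x: "x \<in> {a..b}" for x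
  proof -
    have c: "((\<lambda>x. cis (\<phi> x)) has_vector_derivative (\<i> * cis (\<phi> x) * of_real (\<phi>' x))) (at x)"
      using has_derivative_cis[OF d1[of x, unfolded has_field_derivative_def]]
      by (simp add: has_vector_derivative_def algebra_simps scaleR_conv_of_real)
    have i: "((\<lambda>x. 1 / \<phi>' x) has_real_derivative (- \<phi>'' x / (\<phi>' x)\<^sup>2)) (at x)"
      using nz[OF x] d2[of x] by (auto intro!: derivative_eq_intros simp: power2_eq_square)
    have "(E has_vector_derivative (- \<i> * cis (\<phi> x)) * of_real (- \<phi>'' x / (\<phi>' x)\<^sup>2)
        + (- \<i> * (\<i> * cis (\<phi> x) * of_real (\<phi>' x))) * of_real (1 / \<phi>' x)) (at x)"
      unfolding E_def
      by (rule has_vector_derivative_mult[OF has_vector_derivative_mult_right[OF c]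
            has_vector_derivative_of_real[OF i]])
    then show ?thesis
      using nz[OF x] by (auto intro: has_vector_derivative_at_within simp: field_simps power2_eq_square)
  qed
  then have "((\<lambda>x. cis (\<phi> x) + \<i> * cis (\<phi> x) * of_real (\<phi>'' x / (\<phi>' x)\<^sup>2)) has_integral (E b - E a)) {a..b}"
    by (intro fundamental_theorem_of_calculus[OF ab]) auto
  then show ?thesis by (simp add: E_def divide_inverse of_real_inverse algebra_simps)
qed

lemma has_integral_derivative_over_square:
  fixes f f' :: "real \<Rightarrow> real"
  assumes ab: "a \<le> b" and d: "\<And>x. (f has_real_derivative f' x) (at x)"
    and nz: "\<And>x. x \<in> {a..b} \<Longrightarrow> f x \<noteq> 0"
  shows "((\<lambda>x. f' x / (f x)\<^sup>2) has_integral (1 / f a - 1 / f b)) {a..b}"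
proof -
  have "((\<lambda>x. - 1 / f x) has_real_derivative (f' x / (f x)\<^sup>2)) (at x within {a..b})"
    if "x \<in> {a..b}" for x
    using nz[OF that] has_field_derivative_at_within[OF d[of x]]
    by (auto intro!: derivative_eq_intros simp: power2_eq_square)
  then show ?thesis
    by (intro fundamental_theorem_of_calculus[OF ab, of "\<lambda>x. - 1 / f x", simplified])
       (auto simp: has_real_derivative_iff_has_vector_derivative)
qed

lemma van_der_corput_first_derivative:
  fixes \<phi> \<phi>' \<phi>'' :: "real \<Rightarrow> real"
  assumes ab: "a \<le> b"
    and d1: "\<And>x. (\<phi> has_real_derivative \<phi>' x) (at x)"
    and d2: "\<And>x. (\<phi>' has_real_derivative \<phi>'' x) (at x)"
    and convex: "\<And>x. x \<in> {a..b} \<Longrightarrow> 0 \<le> \<phi>'' x"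
    and \<mu>: "\<mu> > 0" and lb: "\<And>x. x \<in> {a..b} \<Longrightarrow> \<mu> \<le> \<bar>\<phi>' x\<bar>"
  shows "norm (integral {a..b} (\<lambda>x. cis (\<phi> x))) \<le> 4 / \<mu>"
proof -
  define R where "R x = \<i> * cis (\<phi> x) * of_real (\<phi>'' x / (\<phi>' x)\<^sup>2)" for x
  have nz: "\<phi>' x \<noteq> 0" if "x \<in> {a..b}" for x using lb[OF that] \<mu> by auto
  have bound_inv: "\<bar>1 / \<phi>' x\<bar> \<le> 1 / \<mu>" if "x \<in> {a..b}" for x
    using lb[OF that] \<mu> by (auto simp: abs_div field_simps)
  note by_parts = cis_has_integral_by_parts[OF ab d1 d2 nz, folded R_def]
  have cont: "continuous_on {a..b} (\<lambda>x. cis (\<phi> x))"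
    using d1 by (intro continuous_intros) (meson DERIV_isCont continuous_at_imp_continuous_on)
  then have int: "(\<lambda>x. cis (\<phi> x)) integrable_on {a..b}"
    by (rule integrable_continuous_interval)
  have int_R: "R integrable_on {a..b}"
    using integrable_diff[OF has_integral_integrable[OF by_parts] int] by simp
  note square = has_integral_derivative_over_square[OF ab d2 nz]
  have "norm (integral {a..b} R) \<le> integral {a..b} (\<lambda>x. \<phi>'' x / (\<phi>' x)\<^sup>2)"
    by (intro integral_norm_bound_integral[OF int_R has_integral_integrable[OF square]])
       (use convex in \<open>auto simp: R_def norm_mult norm_divide norm_power\<close>)
  also have "\<dots> = 1 / \<phi>' a - 1 / \<phi>' b"
    using square by (rule integral_unique)
  also have "\<dots> \<le> 2 / \<mu>"
    using bound_inv[of a] bound_inv[of b] ab by (simp del: abs_divide add: abs_le_iff)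
  finally have "norm (integral {a..b} R) \<le> 2 / \<mu>" .
  have boundary: "norm (\<i> * cis (\<phi> x) / of_real (\<phi>' x)) \<le> 1 / \<mu>" if "x \<in> {a..b}" for x
    using bound_inv[OF that] by (simp add: norm_divide norm_mult)
  have "integral {a..b} (\<lambda>x. cis (\<phi> x))
      = \<i> * cis (\<phi> a) / of_real (\<phi>' a) - \<i> * cis (\<phi> b) / of_real (\<phi>' b) - integral {a..b} R"
    using integral_unique[OF by_parts] integral_add[OF int int_R] by (simp add: eq_diff_eq)
  then have "norm (integral {a..b} (\<lambda>x. cis (\<phi> x)))
      \<le> norm (\<i> * cis (\<phi> a) / of_real (\<phi>' a)) + norm (\<i> * cis (\<phi> b) / of_real (\<phi>' b))
         + norm (integral {a..b} R)"
    by (metis norm_triangle_ineq4 add_right_mono order_trans)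
  also have "\<dots> \<le> 1 / \<mu> + 1 / \<mu> + 2 / \<mu>"
    using boundary[of a] boundary[of b] ab \<open>norm (integral {a..b} R) \<le> 2 / \<mu>\<close>
    by (intro add_mono) auto
  finally show ?thesis by simp
qed

lemma van_der_corput_initial_piece:
  fixes \<phi> \<phi>' \<phi>'' :: "real \<Rightarrow> real"
  assumes ab: "a \<le> b"
    and d1: "\<And>x. (\<phi> has_real_derivative \<phi>' x) (at x)"
    and d2: "\<And>x. (\<phi>' has_real_derivative \<phi>'' x) (at x)"
    and convex: "\<And>x. x \<in> {a..b} \<Longrightarrow> 0 \<le> \<phi>'' x"
    and \<mu>: "\<mu> > 0" and right: "- \<mu> \<le> \<phi>' b"
  obtains u where "a \<le> u" "u \<le> b" "- \<mu> \<le> \<phi>' u" "\<phi>' u \<le> max (\<phi>' a) (- \<mu>)"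
    "norm (integral {a..u} (\<lambda>x. cis (\<phi> x))) \<le> 4 / \<mu>"
proof (cases "- \<mu> \<le> \<phi>' a")
  case True
  then show ?thesis using that[of a] ab \<mu> by simp
next
  case False
  have cont: "continuous_on {a..b} \<phi>'"
    using d2 by (meson DERIV_isCont continuous_at_imp_continuous_on)
  obtain u where u: "a \<le> u" "u \<le> b" "\<phi>' u = - \<mu>"
    using IVT'[of \<phi>' a "- \<mu>" b, OF _ right ab cont] False by auto
  have "norm (integral {a..u} (\<lambda>x. cis (\<phi> x))) \<le> 4 / \<mu>"
  proof (rule van_der_corput_first_derivative[OF u(1) d1 d2 _ \<mu>])
    show "0 \<le> \<phi>'' x" if "x \<in> {a..u}" for x using convex that u by auto
    show "\<mu> \<le> \<bar>\<phi>' x\<bar>" if "x \<in> {a..u}" for x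
    proof -
      have "\<phi>' x \<le> \<phi>' u"
        by (rule nonneg_derivative_imp_le[OF d2]) (use convex that u in auto)
      then show ?thesis using u(3) by arith
    qed
  qed
  then show ?thesis using u by (intro that[of u]) auto
qed

lemma van_der_corput_final_piece:
  fixes \<phi> \<phi>' \<phi>'' :: "real \<Rightarrow> real"
  assumes ab: "a \<le> b"
    and d1: "\<And>x. (\<phi> has_real_derivative \<phi>' x) (at x)"
    and d2: "\<And>x. (\<phi>' has_real_derivative \<phi>'' x) (at x)"
    and convex: "\<And>x. x \<in> {a..b} \<Longrightarrow> 0 \<le> \<phi>'' x"
    and \<mu>: "\<mu> > 0" and left: "\<phi>' a \<le> \<mu>"
  obtains v where "a \<le> v" "v \<le> b" "\<phi>' v \<le> \<mu>"
    "norm (integral {v..b} (\<lambda>x. cis (\<phi> x))) \<le> 4 / \<mu>"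
proof (cases "\<phi>' b \<le> \<mu>")
  case True
  then show ?thesis using that[of b] ab \<mu> by simp
next
  case False
  have cont: "continuous_on {a..b} \<phi>'"
    using d2 by (meson DERIV_isCont continuous_at_imp_continuous_on)
  obtain v where v: "a \<le> v" "v \<le> b" "\<phi>' v = \<mu>"
    using IVT'[of \<phi>' a \<mu> b, OF left _ ab cont] False by auto
  have "norm (integral {v..b} (\<lambda>x. cis (\<phi> x))) \<le> 4 / \<mu>"
  proof (rule van_der_corput_first_derivative[OF v(2) d1 d2 _ \<mu>])
    show "0 \<le> \<phi>'' x" if "x \<in> {v..b}" for x using convex that v by auto
    show "\<mu> \<le> \<bar>\<phi>' x\<bar>" if "x \<in> {v..b}" for x
    proof -
      have "\<phi>' v \<le> \<phi>' x"
        by (rule nonneg_derivative_imp_le[OF d2]) (use convex that v in auto)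
      then show ?thesis using v(3) by arith
    qed
  qed
  then show ?thesis using v by (intro that[of v]) auto
qed

lemma van_der_corput_convex_decomposition:
  fixes \<phi> \<phi>' \<phi>'' :: "real \<Rightarrow> real"
  assumes ab: "a \<le> b"
    and d1: "\<And>x. (\<phi> has_real_derivative \<phi>' x) (at x)"
    and d2: "\<And>x. (\<phi>' has_real_derivative \<phi>'' x) (at x)"
    and convex: "\<And>x. x \<in> {a..b} \<Longrightarrow> 0 \<le> \<phi>'' x"
    and \<mu>: "\<mu> > 0"
  obtains u v where "a \<le> u" "u \<le> v" "v \<le> b" "\<phi>' v - \<phi>' u \<le> 2 * \<mu>"
    "norm (integral {a..u} (\<lambda>x. cis (\<phi> x))) \<le> 4 / \<mu>"
    "norm (integral {v..b} (\<lambda>x. cis (\<phi> x))) \<le> 4 / \<mu>"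
proof -
  have mono: "\<phi>' x \<le> \<phi>' y" if "a \<le> x" "x \<le> y" "y \<le> b" for x y
    by (rule nonneg_derivative_imp_le[OF d2 that(2)]) (use convex that in auto)
  have whole: "norm (integral {a..b} (\<lambda>x. cis (\<phi> x))) \<le> 4 / \<mu>"
    if "\<And>x. x \<in> {a..b} \<Longrightarrow> \<mu> \<le> \<bar>\<phi>' x\<bar>"
    using van_der_corput_first_derivative[OF ab d1 d2 convex \<mu> that] by blast
  consider "\<mu> < \<phi>' a" | "\<phi>' b < - \<mu>" | "\<phi>' a \<le> \<mu>" "- \<mu> \<le> \<phi>' b" by linarith
  then show ?thesis
  proof cases
    case 1
    then have "norm (integral {a..b} (\<lambda>x. cis (\<phi> x))) \<le> 4 / \<mu>"
      using mono[of a] by (intro whole) fastforce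
    then show ?thesis using that[of a a] ab \<mu> by simp
  next
    case 2
    then have "norm (integral {a..b} (\<lambda>x. cis (\<phi> x))) \<le> 4 / \<mu>"
      using mono[of _ b] by (intro whole) fastforce
    then show ?thesis using that[of b b] ab \<mu> by simp
  next
    case 3
    obtain u where u: "a \<le> u" "u \<le> b" "- \<mu> \<le> \<phi>' u" "\<phi>' u \<le> max (\<phi>' a) (- \<mu>)"
        and int_au: "norm (integral {a..u} (\<lambda>x. cis (\<phi> x))) \<le> 4 / \<mu>"
      by (rule van_der_corput_initial_piece[OF ab d1 d2 convex \<mu> 3(2)])
    have "\<phi>' u \<le> \<mu>" using u(4) 3(1) \<mu> by linarith
    have convex_ub: "\<And>x. x \<in> {u..b} \<Longrightarrow> 0 \<le> \<phi>'' x" using convex u by auto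
    obtain v where v: "u \<le> v" "v \<le> b" "\<phi>' v \<le> \<mu>"
        and int_vb: "norm (integral {v..b} (\<lambda>x. cis (\<phi> x))) \<le> 4 / \<mu>"
      by (rule van_der_corput_final_piece[OF u(2) d1 d2 convex_ub \<mu> \<open>\<phi>' u \<le> \<mu>\<close>])
    show ?thesis using that[OF u(1) v(1,2) _ int_au int_vb] u(3) v(3) by simp
  qed
qed

text \<open>The first derivative test away from the set where \<open>\<bar>\<phi>'\<bar> < \<mu>\<close>, and the trivial
  bound on that set, which is an interval of length at most \<open>L\<close>.\<close>
lemma van_der_corput_convex:
  fixes \<phi> \<phi>' \<phi>'' :: "real \<Rightarrow> real"
  assumes ab: "a \<le> b"
    and d1: "\<And>x. (\<phi> has_real_derivative \<phi>' x) (at x)"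
    and d2: "\<And>x. (\<phi>' has_real_derivative \<phi>'' x) (at x)"
    and convex: "\<And>x. x \<in> {a..b} \<Longrightarrow> 0 \<le> \<phi>'' x"
    and \<mu>: "\<mu> > 0"
    and short: "\<And>u v. a \<le> u \<Longrightarrow> u \<le> v \<Longrightarrow> v \<le> b \<Longrightarrow> \<phi>' v - \<phi>' u \<le> 2 * \<mu> \<Longrightarrow> v - u \<le> L"
  shows "norm (integral {a..b} (\<lambda>x. cis (\<phi> x))) \<le> 8 / \<mu> + L"
proof -
  obtain u v where uv: "a \<le> u" "u \<le> v" "v \<le> b" "\<phi>' v - \<phi>' u \<le> 2 * \<mu>"
      and int_au: "norm (integral {a..u} (\<lambda>x. cis (\<phi> x))) \<le> 4 / \<mu>"
      and int_vb: "norm (integral {v..b} (\<lambda>x. cis (\<phi> x))) \<le> 4 / \<mu>"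
    by (rule van_der_corput_convex_decomposition[OF ab d1 d2 convex \<mu>])
  have cont: "continuous_on S \<phi>" for S
    using d1 by (meson DERIV_isCont continuous_at_imp_continuous_on)
  have int_uv: "norm (integral {u..v} (\<lambda>x. cis (\<phi> x))) \<le> L"
    using norm_integral_cis_le_length[OF uv(2) cont] short[OF uv] by linarith
  have int: "(\<lambda>x. cis (\<phi> x)) integrable_on {p..q}" for p q
    by (intro integrable_continuous_interval continuous_intros cont)
  have "integral {a..b} (\<lambda>x. cis (\<phi> x)) = integral {a..u} (\<lambda>x. cis (\<phi> x))
      + integral {u..v} (\<lambda>x. cis (\<phi> x)) + integral {v..b} (\<lambda>x. cis (\<phi> x))"
    using Henstock_Kurzweil_Integration.integral_combine[OF uv(1) _ int, of b]
      Henstock_Kurzweil_Integration.integral_combine[OF uv(2,3) int] uv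
    by (simp add: add.assoc)
  then have "norm (integral {a..b} (\<lambda>x. cis (\<phi> x))) \<le> norm (integral {a..u} (\<lambda>x. cis (\<phi> x)))
      + norm (integral {u..v} (\<lambda>x. cis (\<phi> x))) + norm (integral {v..b} (\<lambda>x. cis (\<phi> x)))"
    by (metis norm_triangle_ineq add_right_mono order_trans)
  then show ?thesis using int_au int_uv int_vb by linarith
qed

definition vdc_const :: "real \<Rightarrow> nat \<Rightarrow> real" where
  "vdc_const m k = 8 + (2 / m) powr (1 / real k)"

lemma vdc_const_pos: "0 < vdc_const m k"
  unfolding vdc_const_def by (simp add: add_pos_nonneg)

lemma le_powr_inverse_if_power_le:
  fixes d c :: real
  assumes "k > 0" "0 \<le> d" "d ^ k \<le> c"
  shows "d \<le> c powr (1 / real k)"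
proof -
  have "d = root k (d ^ k)" using assms by (simp add: real_root_power_cancel)
  also have "\<dots> \<le> root k c" using assms by (simp add: real_root_le_mono)
  also have "\<dots> = c powr (1 / real k)"
    using assms order_trans[OF zero_le_power[OF assms(2)] assms(3)] by (simp add: root_powr_inverse)
  finally show ?thesis .
qed

lemma power_growth_imp_le_scale:
  fixes d m t :: real and k :: nat
  assumes k: "k > 0" and m: "m > 0" and t: "t > 0" and d: "0 \<le> d"
    and growth: "t * (m * d ^ k) \<le> 2 * t powr (1 / real (k + 1))"
  shows "d \<le> (2 / m) powr (1 / real k) * t powr (- 1 / real (k + 1))"
proof -
  have e: "1 / real (k + 1) = 1 + - real k / real (k + 1)" by (simp add: field_simps)
  have "t powr (1 / real (k + 1)) = t powr 1 * t powr (- real k / real (k + 1))"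
    unfolding e by (rule powr_add)
  then have "t * (m * d ^ k) \<le> t * (2 * t powr (- real k / real (k + 1)))"
    using growth t by simp
  then have "d ^ k \<le> 2 / m * t powr (- real k / real (k + 1))"
    using m t by (simp add: field_simps)
  then have "d \<le> (2 / m * t powr (- real k / real (k + 1))) powr (1 / real k)"
    using k d by (intro le_powr_inverse_if_power_le) auto
  also have "\<dots> = (2 / m) powr (1 / real k) * (t powr (- real k / real (k + 1))) powr (1 / real k)"
    by (rule powr_mult)
  also have "(t powr (- real k / real (k + 1))) powr (1 / real k) = t powr (- 1 / real (k + 1))"
    using k by (simp add: powr_powr)
  finally show ?thesis .
qed

text \<open>Choose \<open>\<mu> = t powr (1 / (k + 1))\<close>: the set where \<open>\<bar>t \<phi>'\<bar> < \<mu>\<close> then has length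
  at most \<open>(2 / m) powr (1 / k) * t powr (- 1 / (k + 1))\<close>.\<close>
lemma van_der_corput_power_growth:
  fixes \<phi> \<phi>' \<phi>'' :: "real \<Rightarrow> real" and k :: nat
  assumes ab: "a \<le> b"
    and d1: "\<And>x. (\<phi> has_real_derivative \<phi>' x) (at x)"
    and d2: "\<And>x. (\<phi>' has_real_derivative \<phi>'' x) (at x)"
    and convex: "\<And>x. x \<in> {a..b} \<Longrightarrow> 0 \<le> \<phi>'' x"
    and m: "m > 0" and k: "k > 0" and t: "t > 0"
    and growth: "\<And>u v. a \<le> u \<Longrightarrow> u \<le> v \<Longrightarrow> v \<le> b \<Longrightarrow> m * (v - u) ^ k \<le> \<phi>' v - \<phi>' u"
  shows "norm (integral {a..b} (\<lambda>x. cis (t * \<phi> x))) \<le> vdc_const m k * t powr (- 1 / real (k + 1))"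
proof -
  define \<mu> where "\<mu> = t powr (1 / real (k + 1))"
  define L where "L = (2 / m) powr (1 / real k) * t powr (- 1 / real (k + 1))"
  have \<mu>: "\<mu> > 0" using t by (simp add: \<mu>_def)
  have "norm (integral {a..b} (\<lambda>x. cis (t * \<phi> x))) \<le> 8 / \<mu> + L"
  proof (rule van_der_corput_convex[OF ab _ _ _ \<mu>])
    show "((\<lambda>x. t * \<phi> x) has_real_derivative t * \<phi>' x) (at x)" for x
      using d1[of x] by (auto intro!: derivative_eq_intros)
    show "((\<lambda>x. t * \<phi>' x) has_real_derivative t * \<phi>'' x) (at x)" for x
      using d2[of x] by (auto intro!: derivative_eq_intros)
    show "0 \<le> t * \<phi>'' x" if "x \<in> {a..b}" for x using convex[OF that] t by simp
    show "v - u \<le> L" if uv: "a \<le> u" "u \<le> v" "v \<le> b" and small: "t * \<phi>' v - t * \<phi>' u \<le> 2 * \<mu>"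
      for u v
    proof -
      have "t * (m * (v - u) ^ k) \<le> t * (\<phi>' v - \<phi>' u)" using growth[OF uv] t by simp
      also have "\<dots> \<le> 2 * t powr (1 / real (k + 1))" using small by (simp add: \<mu>_def algebra_simps)
      finally show ?thesis unfolding L_def using uv by (intro power_growth_imp_le_scale[OF k m t]) auto
    qed
  qed
  also have "8 / \<mu> = 8 * t powr (- 1 / real (k + 1))"
    using t by (simp add: \<mu>_def powr_minus_divide divide_inverse powr_minus)
  finally show ?thesis unfolding vdc_const_def L_def by (simp add: algebra_simps)
qed

lemma norm_integral_cis_uminus:
  "norm (integral S (\<lambda>x. cis (- f x))) = norm (integral S (\<lambda>x. cis (f x)))"
  by (simp add: cis_cnj[symmetric] flip: Henstock_Kurzweil_Integration.integral_cnj)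

lemma van_der_corput_power_growth_concave:
  fixes \<phi> \<phi>' \<phi>'' :: "real \<Rightarrow> real" and k :: nat
  assumes ab: "a \<le> b"
    and d1: "\<And>x. (\<phi> has_real_derivative \<phi>' x) (at x)"
    and d2: "\<And>x. (\<phi>' has_real_derivative \<phi>'' x) (at x)"
    and concave: "\<And>x. x \<in> {a..b} \<Longrightarrow> \<phi>'' x \<le> 0"
    and m: "m > 0" and k: "k > 0" and t: "t > 0"
    and growth: "\<And>u v. a \<le> u \<Longrightarrow> u \<le> v \<Longrightarrow> v \<le> b \<Longrightarrow> m * (v - u) ^ k \<le> \<phi>' u - \<phi>' v"
  shows "norm (integral {a..b} (\<lambda>x. cis (t * \<phi> x))) \<le> vdc_const m k * t powr (- 1 / real (k + 1))"
proof -
  have "norm (integral {a..b} (\<lambda>x. cis (t * - \<phi> x))) \<le> vdc_const m k * t powr (- 1 / real (k + 1))"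
  proof (rule van_der_corput_power_growth[OF ab _ _ _ m k t])
    show "((\<lambda>x. - \<phi> x) has_real_derivative - \<phi>' x) (at x)" for x
      using d1[of x] by (auto intro!: derivative_eq_intros)
    show "((\<lambda>x. - \<phi>' x) has_real_derivative - \<phi>'' x) (at x)" for x
      using d2[of x] by (auto intro!: derivative_eq_intros)
  qed (use concave growth in auto)
  then show ?thesis using norm_integral_cis_uminus[of _ "\<lambda>x. t * \<phi> x"] by simp
qed

lemma derivative_growth_from_left:
  fixes h h' :: "real \<Rightarrow> real"
  assumes d: "\<And>x. (h has_real_derivative h' x) (at x)" and "p \<le> u" "u \<le> v" "0 \<le> m"
    and lb: "\<And>x. u \<le> x \<Longrightarrow> x \<le> v \<Longrightarrow> m * (x - p) ^ j \<le> h' x"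
  shows "m / real (Suc j) * (v - u) ^ Suc j \<le> h v - h u"
proof -
  define G where "G x = h x - m * (x - u) ^ Suc j / real (Suc j)" for x
  have "G u \<le> G v"
  proof (rule nonneg_derivative_imp_le[OF _ \<open>u \<le> v\<close>])
    show "(G has_real_derivative h' x - m * (x - u) ^ j) (at x)" for x
      unfolding G_def using d[of x] by (auto intro!: derivative_eq_intros simp del: power_Suc)
    show "0 \<le> h' x - m * (x - u) ^ j" if "u \<le> x" "x \<le> v" for x
      using lb[OF that] mult_left_mono[OF power_mono[of "x - u" "x - p" j] \<open>0 \<le> m\<close>] that assms(2)
      by auto
  qed
  then show ?thesis unfolding G_def by simp
qed

lemma derivative_growth_from_right:
  fixes h h' :: "real \<Rightarrow> real"
  assumes d: "\<And>x. (h has_real_derivative h' x) (at x)" and "u \<le> v" "v \<le> q" "0 \<le> m"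
    and lb: "\<And>x. u \<le> x \<Longrightarrow> x \<le> v \<Longrightarrow> m * (q - x) ^ j \<le> h' x"
  shows "m / real (Suc j) * (v - u) ^ Suc j \<le> h v - h u"
proof -
  define G where "G x = h x + m * (v - x) ^ Suc j / real (Suc j)" for x
  have "G u \<le> G v"
  proof (rule nonneg_derivative_imp_le[OF _ \<open>u \<le> v\<close>])
    show "(G has_real_derivative h' x - m * (v - x) ^ j) (at x)" for x
      unfolding G_def using d[of x] by (auto intro!: derivative_eq_intros simp del: power_Suc)
    show "0 \<le> h' x - m * (v - x) ^ j" if "u \<le> x" "x \<le> v" for x
      using lb[OF that] mult_left_mono[OF power_mono[of "v - x" "q - x" j] \<open>0 \<le> m\<close>] that assms(3)
      by auto
  qed
  then show ?thesis unfolding G_def by simp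
qed

lemma van_der_corput_second_derivative_ge:
  fixes \<phi> \<phi>' \<phi>'' :: "real \<Rightarrow> real" and j :: nat
  assumes d1: "\<And>x. (\<phi> has_real_derivative \<phi>' x) (at x)"
    and d2: "\<And>x. (\<phi>' has_real_derivative \<phi>'' x) (at x)"
    and pb: "p \<le> b" and m: "m > 0" and t: "t > 0"
    and lb: "\<And>x. x \<in> {p..b} \<Longrightarrow> m * (x - p) ^ j \<le> \<phi>'' x"
  shows "norm (integral {p..b} (\<lambda>x. cis (t * \<phi> x))) \<le> vdc_const (m / real (Suc j)) (Suc j) * t powr (- 1 / real (Suc j + 1))"
proof (rule van_der_corput_power_growth[OF pb d1 d2 _ _ _ t])
  show "0 \<le> \<phi>'' x" if "x \<in> {p..b}" for x
  proof -
    have "0 \<le> m * (x - p) ^ j" using that m by simp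
    then show ?thesis using lb[OF that] by linarith
  qed
  show "m / real (Suc j) * (v - u) ^ Suc j \<le> \<phi>' v - \<phi>' u" if "p \<le> u" "u \<le> v" "v \<le> b" for u v
    using that m lb by (intro derivative_growth_from_left[OF d2]) auto
qed (use m in auto)

lemma van_der_corput_second_derivative_le:
  fixes \<phi> \<phi>' \<phi>'' :: "real \<Rightarrow> real" and j :: nat
  assumes d1: "\<And>x. (\<phi> has_real_derivative \<phi>' x) (at x)"
    and d2: "\<And>x. (\<phi>' has_real_derivative \<phi>'' x) (at x)"
    and pb: "p \<le> b" and m: "m > 0" and t: "t > 0"
    and lb: "\<And>x. x \<in> {p..b} \<Longrightarrow> m * (x - p) ^ j \<le> - \<phi>'' x"
  shows "norm (integral {p..b} (\<lambda>x. cis (t * \<phi> x))) \<le> vdc_const (m / real (Suc j)) (Suc j) * t powr (- 1 / real (Suc j + 1))"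
proof (rule van_der_corput_power_growth_concave[OF pb d1 d2 _ _ _ t])
  have d2': "((\<lambda>x. - \<phi>' x) has_real_derivative - \<phi>'' x) (at x)" for x
    using d2[of x] by (auto intro!: derivative_eq_intros)
  show "\<phi>'' x \<le> 0" if "x \<in> {p..b}" for x
  proof -
    have "0 \<le> m * (x - p) ^ j" using that m by simp
    then show ?thesis using lb[OF that] by linarith
  qed
  show "m / real (Suc j) * (v - u) ^ Suc j \<le> \<phi>' u - \<phi>' v" if "p \<le> u" "u \<le> v" "v \<le> b" for u v
    using derivative_growth_from_left[OF d2' that(1,2), of m] that m lb by auto
qed (use m in auto)

lemma van_der_corput_second_derivative_le_right:
  fixes \<phi> \<phi>' \<phi>'' :: "real \<Rightarrow> real" and j :: nat
  assumes d1: "\<And>x. (\<phi> has_real_derivative \<phi>' x) (at x)"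
    and d2: "\<And>x. (\<phi>' has_real_derivative \<phi>'' x) (at x)"
    and pb: "p \<le> b" and bq: "b \<le> q" and m: "m > 0" and t: "t > 0"
    and lb: "\<And>x. x \<in> {p..b} \<Longrightarrow> m * (q - x) ^ j \<le> - \<phi>'' x"
  shows "norm (integral {p..b} (\<lambda>x. cis (t * \<phi> x))) \<le> vdc_const (m / real (Suc j)) (Suc j) * t powr (- 1 / real (Suc j + 1))"
proof (rule van_der_corput_power_growth_concave[OF pb d1 d2 _ _ _ t])
  have d2': "((\<lambda>x. - \<phi>' x) has_real_derivative - \<phi>'' x) (at x)" for x
    using d2[of x] by (auto intro!: derivative_eq_intros)
  show "\<phi>'' x \<le> 0" if "x \<in> {p..b}" for x
  proof -
    have "0 \<le> m * (q - x) ^ j" using that bq m by simp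
    then show ?thesis using lb[OF that] by linarith
  qed
  show "m / real (Suc j) * (v - u) ^ Suc j \<le> \<phi>' u - \<phi>' v" if "p \<le> u" "u \<le> v" "v \<le> b" for u v
    using derivative_growth_from_right[OF d2' that(2), of q m] that bq m lb by auto
qed (use m in auto)

section \<open>Oscillatory integrals over the real line\<close>

lemma norm_integral_le_split:
  fixes f :: "real \<Rightarrow> 'a::banach"
  assumes int: "\<And>a b. f integrable_on {a..b}" and "0 \<le> p" and "0 \<le> Y"
    and left: "\<And>b. 0 \<le> b \<Longrightarrow> b \<le> p \<Longrightarrow> norm (integral {0..b} f) \<le> X"
    and right: "\<And>b. p \<le> b \<Longrightarrow> b \<le> q \<Longrightarrow> norm (integral {p..b} f) \<le> Y"
    and b: "0 \<le> b" "b \<le> q"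
  shows "norm (integral {0..b} f) \<le> X + Y"
proof (cases "b \<le> p")
  case True
  then show ?thesis using left[OF b(1)] \<open>0 \<le> Y\<close> by simp
next
  case False
  then have "integral {0..b} f = integral {0..p} f + integral {p..b} f"
    using Henstock_Kurzweil_Integration.integral_combine[OF \<open>0 \<le> p\<close> _ int] by simp
  then have "norm (integral {0..b} f) \<le> norm (integral {0..p} f) + norm (integral {p..b} f)"
    by (simp add: norm_triangle_ineq)
  also have "\<dots> \<le> X + Y" using left[OF \<open>0 \<le> p\<close> order_refl] right[of b] False b by (intro add_mono) auto
  finally show ?thesis .
qed

lemma Cauchy_at_top_imp_convergent:
  fixes F :: "real \<Rightarrow> 'a::complete_space"
  assumes "\<And>e. e > 0 \<Longrightarrow> \<exists>R. \<forall>x y. R \<le> x \<longrightarrow> x \<le> y \<longrightarrow> dist (F x) (F y) < e"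
  shows "\<exists>L. (F \<longlongrightarrow> L) at_top"
proof -
  have "cauchy_filter (filtermap F at_top)"
    unfolding cauchy_filter_metric_filtermap
  proof (intro allI impI)
    fix e :: real assume "e > 0"
    then obtain R where R: "\<forall>x y. R \<le> x \<longrightarrow> x \<le> y \<longrightarrow> dist (F x) (F y) < e" using assms by blast
    have "dist (F x) (F y) < e" if "R \<le> x" "R \<le> y" for x y
      using R that by (cases "x \<le> y") (auto simp: dist_commute)
    then show "\<exists>P. eventually P at_top \<and> (\<forall>x y. P x \<and> P y \<longrightarrow> dist (F x) (F y) < e)"
      by (intro exI[of _ "\<lambda>x. R \<le> x"]) (auto simp: eventually_ge_at_top)
  qed
  then have "convergent_filter (filtermap F at_top)" by (rule cauchy_filter_convergent)
  then show ?thesis by (auto simp: convergent_filter_iff filterlim_def)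
qed

lemma integral_cis_convergent_at_top:
  fixes \<phi> \<phi>' \<phi>'' :: "real \<Rightarrow> real"
  assumes d1: "\<And>x. (\<phi> has_real_derivative \<phi>' x) (at x)"
    and d2: "\<And>x. (\<phi>' has_real_derivative \<phi>'' x) (at x)"
    and convex: "\<And>x. R\<^sub>0 \<le> x \<Longrightarrow> 0 \<le> \<phi>'' x"
    and lim: "filterlim \<phi>' at_top at_top"
  shows "\<exists>L. ((\<lambda>B. integral {0..B} (\<lambda>x. cis (\<phi> x))) \<longlongrightarrow> L) at_top"
proof (rule Cauchy_at_top_imp_convergent)
  fix e :: real assume e: "e > 0"
  obtain N where N: "\<And>x. N \<le> x \<Longrightarrow> 8 / e \<le> \<phi>' x"
    using lim unfolding filterlim_at_top eventually_at_top_linorder by blast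
  define R where "R = max N (max R\<^sub>0 0)"
  have int: "(\<lambda>x. cis (\<phi> x)) integrable_on {a..b}" for a b
    using d1 by (intro integrable_continuous_interval continuous_intros)
      (meson DERIV_isCont continuous_at_imp_continuous_on)
  have tail: "norm (integral {x..y} (\<lambda>x. cis (\<phi> x))) \<le> 4 / (8 / e)" if "R \<le> x" "x \<le> y" for x y
  proof (rule van_der_corput_first_derivative[OF that(2) d1 d2])
    show "0 \<le> \<phi>'' z" if "z \<in> {x..y}" for z
      using convex \<open>R \<le> x\<close> that unfolding R_def by auto
    show "8 / e \<le> \<bar>\<phi>' z\<bar>" if "z \<in> {x..y}" for z
      using N[of z] \<open>R \<le> x\<close> that unfolding R_def by auto
  qed (use e in simp)
  have "dist (integral {0..x} (\<lambda>x. cis (\<phi> x))) (integral {0..y} (\<lambda>x. cis (\<phi> x))) < e"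
    if "R \<le> x" "x \<le> y" for x y
  proof -
    have "integral {0..y} (\<lambda>x. cis (\<phi> x)) = integral {0..x} (\<lambda>x. cis (\<phi> x)) + integral {x..y} (\<lambda>x. cis (\<phi> x))"
      using Henstock_Kurzweil_Integration.integral_combine[OF _ that(2) int, of 0] that
      unfolding R_def by simp
    then show ?thesis using tail[OF that] e by (simp add: dist_norm norm_minus_commute)
  qed
  then show "\<exists>R. \<forall>x y. R \<le> x \<longrightarrow> x \<le> y \<longrightarrow>
      dist (integral {0..x} (\<lambda>x. cis (\<phi> x))) (integral {0..y} (\<lambda>x. cis (\<phi> x))) < e"
    by blast
qed

lemma has_improper_integral_R_from_halves:
  fixes f :: "real \<Rightarrow> complex"
  assumes int: "\<And>a b. f integrable_on {a..b}"
    and pos: "((\<lambda>B. integral {0..B} f) \<longlongrightarrow> L\<^sub>p) at_top"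
    and neg: "((\<lambda>B. integral {0..B} (\<lambda>x. f (- x))) \<longlongrightarrow> L\<^sub>n) at_top"
  shows "has_improper_integral_R f (L\<^sub>n + L\<^sub>p)"
proof -
  have split: "integral {0..-a} (\<lambda>x. f (- x)) + integral {0..b} f = integral {a..b} f"
    if "a \<le> 0" "0 \<le> b" for a b
    using Henstock_Kurzweil_Integration.integral_combine[OF that int]
      Henstock_Kurzweil_Integration.integral_reflect_real[of 0 a f] by simp
  have "((\<lambda>p. integral {0..-fst p} (\<lambda>x. f (- x)) + integral {0..snd p} f) \<longlongrightarrow> L\<^sub>n + L\<^sub>p)
      (at_bot \<times>\<^sub>F at_top)"
    by (intro tendsto_add filterlim_compose[OF neg filterlim_compose[OF filterlim_uminus_at_top_at_bot filterlim_fst]]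
        filterlim_compose[OF pos filterlim_snd])
  moreover have "eventually (\<lambda>p. integral {0..-fst p} (\<lambda>x. f (- x)) + integral {0..snd p} f
      = integral {fst p..snd p} f) (at_bot \<times>\<^sub>F at_top)"
    unfolding eventually_prod_filter
  proof (intro exI conjI)
    show "eventually (\<lambda>a::real. a \<le> 0) at_bot" by (rule eventually_le_at_bot)
    show "eventually (\<lambda>b::real. 0 \<le> b) at_top" by (rule eventually_ge_at_top)
  qed (simp add: split)
  ultimately have "((\<lambda>p. integral {fst p..snd p} f) \<longlongrightarrow> L\<^sub>n + L\<^sub>p) (at_bot \<times>\<^sub>F at_top)"
    by (rule Lim_transform_eventually)
  then show ?thesis unfolding has_improper_integral_R_def case_prod_beta using int by blast
qed

section \<open>The phase\<close>

definition quartic :: "real \<Rightarrow> real \<Rightarrow> real" where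
  "quartic \<beta> x = 1 - \<beta> * x\<^sup>2 + x ^ 4"

definition cubic :: "real \<Rightarrow> real \<Rightarrow> real" where
  "cubic \<beta> y = - 3 * \<beta> + (2 * \<beta>\<^sup>2 + 10) * y - 9 * \<beta> * y\<^sup>2 + 6 * y ^ 3"

definition half_phase :: "real \<Rightarrow> real \<Rightarrow> real" where
  "half_phase \<beta> x = x * sqrt (quartic \<beta> x)"

definition half_phase' :: "real \<Rightarrow> real \<Rightarrow> real" where
  "half_phase' \<beta> x = (1 - 2 * \<beta> * x\<^sup>2 + 3 * x ^ 4) / sqrt (quartic \<beta> x)"

definition half_phase'' :: "real \<Rightarrow> real \<Rightarrow> real" where
  "half_phase'' \<beta> x = x * cubic \<beta> (x\<^sup>2) / sqrt (quartic \<beta> x) ^ 3"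

lemma quartic_pos:
  assumes "\<beta> < 2"
  shows "0 < quartic \<beta> x"
proof (cases "\<beta> \<le> 0")
  case True
  then have "\<beta> * x\<^sup>2 \<le> 0" by (simp add: mult_nonpos_nonneg)
  moreover have "0 \<le> x ^ 4" by simp
  ultimately show ?thesis unfolding quartic_def by linarith
next
  case False
  then have "\<beta>\<^sup>2 < 4"
    using assms mult_strict_mono[of \<beta> 2 \<beta> 2] by (simp add: power2_eq_square)
  moreover have "quartic \<beta> x = (x\<^sup>2 - \<beta> / 2)\<^sup>2 + (1 - \<beta>\<^sup>2 / 4)"
    unfolding quartic_def by (simp add: power2_eq_square power4_eq_xxxx algebra_simps)
  moreover have "0 \<le> (x\<^sup>2 - \<beta> / 2)\<^sup>2" by simp
  ultimately show ?thesis by linarith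
qed

lemma phase_eq_half_phase:
  assumes "0 \<le> x"
  shows "phase \<beta> x \<alpha> = half_phase \<beta> x + \<alpha> * x"
proof -
  have "x\<^sup>2 - \<beta> * x ^ 4 + x ^ 6 = x\<^sup>2 * quartic \<beta> x"
    unfolding quartic_def by algebra
  then show ?thesis
    using assms by (simp add: phase_def half_phase_def real_sqrt_mult)
qed

lemma phase_uminus: "phase \<beta> (- x) \<alpha> = phase \<beta> x (- \<alpha>)"
  by (simp add: phase_def)

lemma sqrt_quartic_has_derivative:
  assumes "\<beta> < 2"
  shows "((\<lambda>x. sqrt (quartic \<beta> x)) has_real_derivative (2 * x ^ 3 - \<beta> * x) / sqrt (quartic \<beta> x)) (at x)"
proof -
  have "(quartic \<beta> has_real_derivative 4 * x ^ 3 - 2 * \<beta> * x) (at x)"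
    unfolding quartic_def[abs_def] by (auto intro!: derivative_eq_intros simp: power2_eq_square power3_eq_cube)
  from DERIV_chain2[OF DERIV_real_sqrt[OF quartic_pos[OF assms]] this]
  show ?thesis
    by (rule DERIV_cong) (use quartic_pos[OF assms, of x] in \<open>simp add: field_simps\<close>)
qed

lemma half_phase_has_derivative:
  assumes "\<beta> < 2"
  shows "((\<lambda>x. half_phase \<beta> x + c * x) has_real_derivative half_phase' \<beta> x + c) (at x)"
proof -
  have "((\<lambda>x. x * sqrt (quartic \<beta> x) + c * x) has_real_derivative
      1 * sqrt (quartic \<beta> x) + (2 * x ^ 3 - \<beta> * x) / sqrt (quartic \<beta> x) * x + c) (at x)"
    by (rule DERIV_add[OF DERIV_mult[OF DERIV_ident sqrt_quartic_has_derivative[OF assms]] DERIV_cmult_Id])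
  moreover have "1 * sqrt (quartic \<beta> x) + (2 * x ^ 3 - \<beta> * x) / sqrt (quartic \<beta> x) * x
      = half_phase' \<beta> x"
    using quartic_pos[OF assms, of x]
    by (simp add: half_phase'_def field_simps) (simp add: quartic_def power2_eq_square power3_eq_cube power4_eq_xxxx algebra_simps)
  ultimately show ?thesis unfolding half_phase_def by simp
qed

lemma half_phase'_has_derivative:
  assumes "\<beta> < 2"
  shows "((\<lambda>x. half_phase' \<beta> x + c) has_real_derivative half_phase'' \<beta> x) (at x)"
proof -
  have q: "0 < quartic \<beta> x" using quartic_pos[OF assms] .
  have "((\<lambda>x. 1 - 2 * \<beta> * x\<^sup>2 + 3 * x ^ 4) has_real_derivative 12 * x ^ 3 - 4 * \<beta> * x) (at x)"
    by (auto intro!: derivative_eq_intros simp: power2_eq_square power3_eq_cube)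
  from DERIV_add[OF DERIV_divide[OF this sqrt_quartic_has_derivative[OF assms]] DERIV_const[of c]]
  have "((\<lambda>x. half_phase' \<beta> x + c) has_real_derivative
      ((12 * x ^ 3 - 4 * \<beta> * x) * sqrt (quartic \<beta> x)
        - (1 - 2 * \<beta> * x\<^sup>2 + 3 * x ^ 4) * ((2 * x ^ 3 - \<beta> * x) / sqrt (quartic \<beta> x)))
      / (sqrt (quartic \<beta> x) * sqrt (quartic \<beta> x))) (at x)"
    using q unfolding half_phase'_def by simp
  moreover have "((12 * x ^ 3 - 4 * \<beta> * x) * sqrt (quartic \<beta> x)
        - (1 - 2 * \<beta> * x\<^sup>2 + 3 * x ^ 4) * ((2 * x ^ 3 - \<beta> * x) / sqrt (quartic \<beta> x)))
      / (sqrt (quartic \<beta> x) * sqrt (quartic \<beta> x)) = half_phase'' \<beta> x"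
    using q
    by (simp add: half_phase''_def field_simps power3_eq_cube)
       (simp add: quartic_def cubic_def power2_eq_square power3_eq_cube power4_eq_xxxx algebra_simps)
  ultimately show ?thesis by simp
qed

lemma sqrt_quartic_le: "sqrt (quartic \<beta> x) \<le> (1 + \<bar>\<beta>\<bar>) * (1 + x\<^sup>2)"
proof -
  define K where "K = 1 + \<bar>\<beta>\<bar>"
  have K: "1 \<le> K" "\<bar>\<beta>\<bar> \<le> K" unfolding K_def by auto
  have "- \<beta> * x\<^sup>2 \<le> K * x\<^sup>2" using K by (intro mult_right_mono) auto
  also have "\<dots> \<le> K\<^sup>2 * (2 * x\<^sup>2)" using K by (intro mult_mono) (auto simp: power2_eq_square)
  finally have "- \<beta> * x\<^sup>2 \<le> K\<^sup>2 * (2 * x\<^sup>2)" .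
  moreover have "1 \<le> K\<^sup>2" "x ^ 4 \<le> K\<^sup>2 * x ^ 4" using K by (auto simp: one_le_power mult_le_cancel_right1)
  moreover have "(K * (1 + x\<^sup>2))\<^sup>2 = K\<^sup>2 + K\<^sup>2 * (2 * x\<^sup>2) + K\<^sup>2 * x ^ 4"
    by (simp add: power2_eq_square power4_eq_xxxx algebra_simps)
  ultimately have "quartic \<beta> x \<le> (K * (1 + x\<^sup>2))\<^sup>2" unfolding quartic_def by linarith
  then have "sqrt (quartic \<beta> x) \<le> sqrt ((K * (1 + x\<^sup>2))\<^sup>2)" by (rule real_sqrt_le_mono)
  then show ?thesis using K unfolding K_def by simp
qed

lemma sqrt_quartic_le_on_0_2:
  assumes "0 \<le> x" "x \<le> 2"
  shows "sqrt (quartic \<beta> x) \<le> 5 * (1 + \<bar>\<beta>\<bar>)"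
proof -
  have "x\<^sup>2 \<le> 2\<^sup>2" using assms by (intro power_mono) auto
  then have "(1 + \<bar>\<beta>\<bar>) * (1 + x\<^sup>2) \<le> (1 + \<bar>\<beta>\<bar>) * 5" by (intro mult_left_mono) auto
  then show ?thesis using sqrt_quartic_le[of \<beta> x] by linarith
qed

lemma half_phase''_ge:
  assumes "\<beta> < 2" "0 \<le> x" "0 \<le> cubic \<beta> (x\<^sup>2)" "sqrt (quartic \<beta> x) \<le> S"
  shows "x * cubic \<beta> (x\<^sup>2) / S ^ 3 \<le> half_phase'' \<beta> x"
proof -
  have "0 < sqrt (quartic \<beta> x)" using quartic_pos[OF assms(1)] by simp
  then have "0 < S" using assms(4) by linarith
  then show ?thesis
    unfolding half_phase''_def using assms quartic_pos[OF assms(1), of x]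
    by (intro divide_left_mono power_mono mult_pos_pos zero_less_power) auto
qed

lemma half_phase''_le:
  assumes "\<beta> < 2" "0 \<le> x" "cubic \<beta> (x\<^sup>2) \<le> 0" "sqrt (quartic \<beta> x) \<le> S"
  shows "half_phase'' \<beta> x \<le> x * cubic \<beta> (x\<^sup>2) / S ^ 3"
proof -
  have "0 < sqrt (quartic \<beta> x)" using quartic_pos[OF assms(1)] by simp
  then have "0 < S" using assms(4) by linarith
  then show ?thesis
    unfolding half_phase''_def using assms quartic_pos[OF assms(1), of x]
    by (intro divide_left_mono_neg power_mono mult_pos_pos zero_less_power)
       (auto simp: mult_nonneg_nonpos)
qed

lemma cubic_ge_cube:
  assumes "\<beta> < 2" "4 \<le> y"
  shows "y ^ 3 \<le> cubic \<beta> y"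
proof -
  have "\<beta> * y\<^sup>2 \<le> 2 * y\<^sup>2" using assms by (intro mult_right_mono) auto
  moreover have "10 * y \<le> (2 * \<beta>\<^sup>2 + 10) * y" using assms by (intro mult_right_mono) auto
  moreover have "y\<^sup>2 * 18 \<le> y\<^sup>2 * (5 * y)" using assms by (intro mult_left_mono) auto
  moreover have "y\<^sup>2 * (5 * y) = 5 * y ^ 3" by (simp add: power2_eq_square power3_eq_cube)
  ultimately show ?thesis
    using assms unfolding cubic_def by linarith
qed

lemma cubic_increment:
  assumes "u \<le> v"
  shows "(10 - 5 * \<beta>\<^sup>2 / 2) * (v - u) \<le> cubic \<beta> v - cubic \<beta> u"
proof -
  have "cubic \<beta> u - (10 - 5 * \<beta>\<^sup>2 / 2) * u \<le> cubic \<beta> v - (10 - 5 * \<beta>\<^sup>2 / 2) * v"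
  proof (rule nonneg_derivative_imp_le[OF _ assms])
    show "((\<lambda>y. cubic \<beta> y - (10 - 5 * \<beta>\<^sup>2 / 2) * y) has_real_derivative 18 * (y - \<beta> / 2)\<^sup>2) (at y)" for y
      unfolding cubic_def by (auto intro!: derivative_eq_intros simp: power2_eq_square algebra_simps)
  qed simp
  then show ?thesis unfolding right_diff_distrib by linarith
qed

lemma cubic_root:
  assumes "0 < \<beta>" "\<beta> < 2"
  obtains y\<^sub>0 where "0 < y\<^sub>0" "y\<^sub>0 < 4" "cubic \<beta> y\<^sub>0 = 0"
proof -
  have neg: "cubic \<beta> 0 < 0" unfolding cubic_def using assms by simp
  have "cubic \<beta> 4 = 8 * \<beta>\<^sup>2 - 147 * \<beta> + 424" unfolding cubic_def by (simp add: power2_eq_square)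
  moreover have "0 \<le> 8 * \<beta>\<^sup>2" by simp
  ultimately have pos: "cubic \<beta> 4 > 0" using assms by linarith
  have "continuous_on {0..4} (cubic \<beta>)" unfolding cubic_def by (intro continuous_intros)
  then obtain y where "0 \<le> y" "y \<le> 4" "cubic \<beta> y = 0"
    using IVT'[of "cubic \<beta>" 0 0 4] neg pos by auto
  moreover have "y \<noteq> 0" "y \<noteq> 4" using calculation neg pos by auto
  ultimately show ?thesis using that[of y] by auto
qed

lemma half_phase''_ge_tail:
  assumes "\<beta> < 2" "2 \<le> x"
  shows "1 / (8 * (1 + \<bar>\<beta>\<bar>) ^ 3) * (x - 2) \<le> half_phase'' \<beta> x"
proof -
  define K where "K = 1 + \<bar>\<beta>\<bar>"
  have K: "0 < K" unfolding K_def by simp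
  have "2\<^sup>2 \<le> x\<^sup>2" using assms by (intro power_mono) auto
  then have y: "4 \<le> x\<^sup>2" by simp
  have "sqrt (quartic \<beta> x) \<le> K * (2 * x\<^sup>2)"
    using sqrt_quartic_le[of \<beta> x] mult_left_mono[of "1 + x\<^sup>2" "2 * x\<^sup>2" K] y K
    unfolding K_def by linarith
  then have "x * cubic \<beta> (x\<^sup>2) / (K * (2 * x\<^sup>2)) ^ 3 \<le> half_phase'' \<beta> x"
    using order_trans[OF zero_le_power cubic_ge_cube[OF assms(1) y]] y assms
    by (intro half_phase''_ge) auto
  moreover have "x * (x\<^sup>2) ^ 3 / (K * (2 * x\<^sup>2)) ^ 3 \<le> x * cubic \<beta> (x\<^sup>2) / (K * (2 * x\<^sup>2)) ^ 3"
    using cubic_ge_cube[OF assms(1) y] assms K by (intro divide_right_mono mult_left_mono) auto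
  moreover have "x * (x\<^sup>2) ^ 3 / (K * (2 * x\<^sup>2)) ^ 3 = 1 / (8 * K ^ 3) * x"
    using y K by (simp add: power_mult_distrib field_simps)
  moreover have "1 / (8 * K ^ 3) * (x - 2) \<le> 1 / (8 * K ^ 3) * x"
    using K by (intro mult_left_mono) auto
  ultimately show ?thesis unfolding K_def by linarith
qed

lemma half_integral_convergent:
  assumes \<beta>: "\<beta> < 2" and t: "t > 0"
  shows "\<exists>L. ((\<lambda>B. integral {0..B} (\<lambda>x. cis (t * (half_phase \<beta> x + c * x)))) \<longlongrightarrow> L) at_top"
proof (rule integral_cis_convergent_at_top)
  show "((\<lambda>x. t * (half_phase \<beta> x + c * x)) has_real_derivative t * (half_phase' \<beta> x + c)) (at x)" for x
    by (rule DERIV_cmult[OF half_phase_has_derivative[OF \<beta>]])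
  show "((\<lambda>x. t * (half_phase' \<beta> x + c)) has_real_derivative t * half_phase'' \<beta> x) (at x)" for x
    by (rule DERIV_cmult[OF half_phase'_has_derivative[OF \<beta>]])
  show "0 \<le> t * half_phase'' \<beta> x" if "2 \<le> x" for x
  proof -
    have "0 \<le> 1 / (8 * (1 + \<bar>\<beta>\<bar>) ^ 3) * (x - 2)" using that by simp
    then show ?thesis using half_phase''_ge_tail[OF \<beta> that] t by simp
  qed
  show "filterlim (\<lambda>x. t * (half_phase' \<beta> x + c)) at_top at_top"
    unfolding half_phase'_def quartic_def using t by real_asymp
qed

lemma phase_improper_integral_bound:
  assumes \<beta>: "\<beta> < 2" and t: "t > 0"
    and bound: "\<And>c B. 0 \<le> B \<Longrightarrow> norm (integral {0..B} (\<lambda>x. cis (t * (half_phase \<beta> x + c * x)))) \<le> K"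
  shows "\<exists>I. has_improper_integral_R (\<lambda>\<xi>. cis (t * phase \<beta> \<xi> \<alpha>)) I \<and> norm I \<le> 2 * K"
proof -
  define F where "F c B = integral {0..B} (\<lambda>x. cis (t * (half_phase \<beta> x + c * x)))" for c B
  obtain L\<^sub>p L\<^sub>n where L\<^sub>p: "(F \<alpha> \<longlongrightarrow> L\<^sub>p) at_top" and L\<^sub>n: "(F (- \<alpha>) \<longlongrightarrow> L\<^sub>n) at_top"
    using half_integral_convergent[OF \<beta> t] unfolding F_def by meson
  have "integral {0..B} (\<lambda>\<xi>. cis (t * phase \<beta> \<xi> \<alpha>)) = F \<alpha> B" for B
    unfolding F_def by (rule integral_cong) (simp add: phase_eq_half_phase)
  moreover have "integral {0..B} (\<lambda>\<xi>. cis (t * phase \<beta> (- \<xi>) \<alpha>)) = F (- \<alpha>) B" for B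
    unfolding F_def by (rule integral_cong) (simp add: phase_uminus phase_eq_half_phase)
  moreover have "(\<lambda>\<xi>. cis (t * phase \<beta> \<xi> \<alpha>)) integrable_on {a..b}" for a b
    unfolding phase_def by (intro integrable_continuous_interval continuous_intros)
  ultimately have "has_improper_integral_R (\<lambda>\<xi>. cis (t * phase \<beta> \<xi> \<alpha>)) (L\<^sub>n + L\<^sub>p)"
    using L\<^sub>p L\<^sub>n by (intro has_improper_integral_R_from_halves) auto
  moreover have "norm L \<le> K" if "(F c \<longlongrightarrow> L) at_top" for c L
    by (rule Lim_norm_ubound[OF _ that]) (use bound in \<open>auto simp: F_def eventually_at_top_linorder\<close>)
  then have "norm L\<^sub>p \<le> K" "norm L\<^sub>n \<le> K" using L\<^sub>p L\<^sub>n by auto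
  ultimately show ?thesis using norm_triangle_ineq[of L\<^sub>n L\<^sub>p] by (intro exI[of _ "L\<^sub>n + L\<^sub>p"]) auto
qed

definition half_integral_decay :: "real \<Rightarrow> (real \<Rightarrow> real) \<Rightarrow> bool" where
  "half_integral_decay \<beta> \<kappa> \<longleftrightarrow> (\<exists>C>0. \<forall>t>0. \<forall>c B. 0 \<le> B \<longrightarrow>
     norm (integral {0..B} (\<lambda>x. cis (t * (half_phase \<beta> x + c * x)))) \<le> C * \<kappa> t)"

lemma half_integrand_integrable:
  "(\<lambda>x. cis (t * (half_phase \<beta> x + c * x))) integrable_on {a..b}"
  unfolding half_phase_def quartic_def by (intro integrable_continuous_interval continuous_intros)

lemma half_integral_le_with_tail:
  assumes \<beta>: "\<beta> < 2" and t: "t > 0" and B: "0 \<le> B"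
    and compact: "\<And>b. 0 \<le> b \<Longrightarrow> b \<le> 2 \<Longrightarrow>
      norm (integral {0..b} (\<lambda>x. cis (t * (half_phase \<beta> x + c * x)))) \<le> X"
  shows "norm (integral {0..B} (\<lambda>x. cis (t * (half_phase \<beta> x + c * x))))
    \<le> X + vdc_const (1 / (16 * (1 + \<bar>\<beta>\<bar>) ^ 3)) 2 * t powr (- 1 / 3)"
proof (rule norm_integral_le_split[OF half_integrand_integrable _ _ compact, where q = B])
  show "norm (integral {2..b} (\<lambda>x. cis (t * (half_phase \<beta> x + c * x))))
      \<le> vdc_const (1 / (16 * (1 + \<bar>\<beta>\<bar>) ^ 3)) 2 * t powr (- 1 / 3)" if "2 \<le> b" for b
  proof -
    have "norm (integral {2..b} (\<lambda>x. cis (t * (half_phase \<beta> x + c * x))))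
      \<le> vdc_const (1 / (8 * (1 + \<bar>\<beta>\<bar>) ^ 3) / real (Suc 1)) (Suc 1) * t powr (- 1 / real (Suc 1 + 1))"
      by (rule van_der_corput_second_derivative_ge[OF half_phase_has_derivative[OF \<beta>]
          half_phase'_has_derivative[OF \<beta>] that _ t])
         (use half_phase''_ge_tail[OF \<beta>] in \<open>auto simp: add_pos_nonneg\<close>)
    then show ?thesis by (simp add: numeral_2_eq_2)
  qed
qed (use B vdc_const_pos t in \<open>auto intro!: mult_nonneg_nonneg less_imp_le\<close>)

lemma half_integral_decay_neg:
  assumes \<beta>: "\<beta> < 0"
  shows "half_integral_decay \<beta> (\<lambda>t. t powr (- 1 / 3))"
proof -
  have \<beta>2: "\<beta> < 2" using \<beta> by simp
  define K where "K = 5 * (1 + \<bar>\<beta>\<bar>)"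
  define m where "m = - 3 * \<beta> / K ^ 3"
  have K: "0 < K" unfolding K_def by (simp add: add_pos_nonneg)
  have m: "0 < m" unfolding m_def using \<beta> K by (simp add: divide_neg_pos)
  have lb: "m * (x - 0) ^ 1 \<le> half_phase'' \<beta> x" if "0 \<le> x" "x \<le> 2" for x
  proof -
    have "0 \<le> (2 * \<beta>\<^sup>2 + 10) * x\<^sup>2" "0 \<le> 6 * (x\<^sup>2) ^ 3" by simp_all
    moreover have "0 \<le> - 9 * \<beta> * (x\<^sup>2)\<^sup>2" using \<beta> by (simp add: mult_nonpos_nonneg)
    ultimately have cubic: "- 3 * \<beta> \<le> cubic \<beta> (x\<^sup>2)" unfolding cubic_def by linarith
    have "m * (x - 0) ^ 1 = x * (- 3 * \<beta>) / K ^ 3" unfolding m_def by simp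
    also have "\<dots> \<le> x * cubic \<beta> (x\<^sup>2) / K ^ 3"
      using cubic that K by (intro divide_right_mono mult_left_mono) auto
    also have "\<dots> \<le> half_phase'' \<beta> x"
      using cubic \<beta> that sqrt_quartic_le_on_0_2[OF that, of \<beta>] unfolding K_def
      by (intro half_phase''_ge[OF \<beta>2]) auto
    finally show ?thesis .
  qed
  define C where "C = vdc_const (m / 2) 2 + vdc_const (1 / (16 * (1 + \<bar>\<beta>\<bar>) ^ 3)) 2"
  show ?thesis unfolding half_integral_decay_def
  proof (intro exI[of _ C] conjI allI impI)
    show "0 < C" unfolding C_def using vdc_const_pos by (simp add: add_pos_pos)
    fix t c B :: real assume t: "0 < t" and B: "0 \<le> B"
    have "norm (integral {0..B} (\<lambda>x. cis (t * (half_phase \<beta> x + c * x))))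
      \<le> vdc_const (m / 2) 2 * t powr (- 1 / 3) + vdc_const (1 / (16 * (1 + \<bar>\<beta>\<bar>) ^ 3)) 2 * t powr (- 1 / 3)"
    proof (rule half_integral_le_with_tail[OF \<beta>2 t B])
      fix b :: real assume b: "0 \<le> b" "b \<le> 2"
      have "norm (integral {0..b} (\<lambda>x. cis (t * (half_phase \<beta> x + c * x))))
        \<le> vdc_const (m / real (Suc 1)) (Suc 1) * t powr (- 1 / real (Suc 1 + 1))"
        by (rule van_der_corput_second_derivative_ge[OF half_phase_has_derivative[OF \<beta>2]
            half_phase'_has_derivative[OF \<beta>2] b(1) m t]) (use lb b in auto)
      then show "norm (integral {0..b} (\<lambda>x. cis (t * (half_phase \<beta> x + c * x))))
        \<le> vdc_const (m / 2) 2 * t powr (- 1 / 3)" by (simp add: numeral_2_eq_2)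
    qed
    then show "norm (integral {0..B} (\<lambda>x. cis (t * (half_phase \<beta> x + c * x)))) \<le> C * t powr (- 1 / 3)"
      unfolding C_def by (simp add: algebra_simps)
  qed
qed

lemma half_integral_decay_zero: "half_integral_decay 0 (\<lambda>t. t powr (- 1 / 3) + t powr (- 1 / 5))"
proof -
  define m :: real where "m = 10 / 5 ^ 3"
  have lb: "m * (x - 0) ^ 3 \<le> half_phase'' 0 x" if "0 \<le> x" "x \<le> 2" for x
  proof -
    have cubic: "10 * x\<^sup>2 \<le> cubic 0 (x\<^sup>2)" unfolding cubic_def by simp
    moreover have "0 \<le> 10 * x\<^sup>2" by simp
    ultimately have cubic_nonneg: "0 \<le> cubic 0 (x\<^sup>2)" by linarith
    have "m * (x - 0) ^ 3 = x * (10 * x\<^sup>2) / 5 ^ 3" unfolding m_def by (simp add: power2_eq_square power3_eq_cube)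
    also have "\<dots> \<le> x * cubic 0 (x\<^sup>2) / 5 ^ 3"
      using cubic that by (intro divide_right_mono mult_left_mono) auto
    also have "\<dots> \<le> half_phase'' 0 x"
      using cubic_nonneg that sqrt_quartic_le_on_0_2[OF that, of 0]
      by (intro half_phase''_ge) auto
    finally show ?thesis .
  qed
  define C where "C = vdc_const (m / 4) 4 + vdc_const (1 / 16) 2"
  show ?thesis unfolding half_integral_decay_def
  proof (intro exI[of _ C] conjI allI impI)
    show "0 < C" unfolding C_def using vdc_const_pos by (simp add: add_pos_pos)
    fix t c B :: real assume t: "0 < t" and B: "0 \<le> B"
    have "norm (integral {0..B} (\<lambda>x. cis (t * (half_phase 0 x + c * x))))
      \<le> vdc_const (m / 4) 4 * t powr (- 1 / 5)
        + vdc_const (1 / (16 * (1 + \<bar>0\<bar>) ^ 3)) 2 * t powr (- 1 / 3)"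
    proof (rule half_integral_le_with_tail[OF _ t B])
      fix b :: real assume b: "0 \<le> b" "b \<le> 2"
      have "norm (integral {0..b} (\<lambda>x. cis (t * (half_phase 0 x + c * x))))
        \<le> vdc_const (m / real (Suc 3)) (Suc 3) * t powr (- 1 / real (Suc 3 + 1))"
        by (rule van_der_corput_second_derivative_ge[OF half_phase_has_derivative
            half_phase'_has_derivative b(1) _ t]) (use lb b in \<open>auto simp: m_def\<close>)
      then show "norm (integral {0..b} (\<lambda>x. cis (t * (half_phase 0 x + c * x))))
        \<le> vdc_const (m / 4) 4 * t powr (- 1 / 5)" by (simp add: numeral_eq_Suc)
    qed simp
    also have "\<dots> \<le> C * (t powr (- 1 / 3) + t powr (- 1 / 5))"
      unfolding C_def using vdc_const_pos[of "m / 4" 4] vdc_const_pos[of "1 / 16" 2]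
      by (simp add: algebra_simps add_increasing)
    finally show "norm (integral {0..B} (\<lambda>x. cis (t * (half_phase 0 x + c * x))))
      \<le> C * (t powr (- 1 / 3) + t powr (- 1 / 5))" .
  qed
qed

lemma half_phase''_near_root:
  assumes \<beta>: "0 < \<beta>" "\<beta> < 2" and r: "cubic \<beta> (r\<^sup>2) = 0" "0 \<le> r" and x: "0 \<le> x" "x \<le> 2"
  defines "\<gamma> \<equiv> (10 - 5 * \<beta>\<^sup>2 / 2) / (5 * (1 + \<bar>\<beta>\<bar>)) ^ 3"
  shows "x \<le> r \<Longrightarrow> \<gamma> * (x * (r\<^sup>2 - x\<^sup>2)) \<le> - half_phase'' \<beta> x"
    and "r \<le> x \<Longrightarrow> \<gamma> * (x * (x\<^sup>2 - r\<^sup>2)) \<le> half_phase'' \<beta> x"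
proof -
  define \<delta> where "\<delta> = 10 - 5 * \<beta>\<^sup>2 / 2"
  define S where "S = 5 * (1 + \<bar>\<beta>\<bar>)"
  have "\<beta>\<^sup>2 < 4" using \<beta> mult_strict_mono[of \<beta> 2 \<beta> 2] by (simp add: power2_eq_square)
  then have \<delta>: "0 < \<delta>" unfolding \<delta>_def by simp
  have S: "0 < S ^ 3" unfolding S_def by (simp add: add_pos_nonneg)
  have sqrt_le: "sqrt (quartic \<beta> x) \<le> S" unfolding S_def by (rule sqrt_quartic_le_on_0_2[OF x])
  have \<gamma>: "\<gamma> = \<delta> / S ^ 3" unfolding \<gamma>_def \<delta>_def S_def ..
  show "\<gamma> * (x * (r\<^sup>2 - x\<^sup>2)) \<le> - half_phase'' \<beta> x" if "x \<le> r"
  proof -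
    have "x\<^sup>2 \<le> r\<^sup>2" using that x by (intro power_mono) auto
    then have "\<delta> * (r\<^sup>2 - x\<^sup>2) \<le> cubic \<beta> (r\<^sup>2) - cubic \<beta> (x\<^sup>2)" "0 \<le> \<delta> * (r\<^sup>2 - x\<^sup>2)"
      unfolding \<delta>_def using cubic_increment \<delta> \<delta>_def by auto
    then have cubic: "cubic \<beta> (x\<^sup>2) \<le> - \<delta> * (r\<^sup>2 - x\<^sup>2)" "- \<delta> * (r\<^sup>2 - x\<^sup>2) \<le> 0"
      using r by auto
    have "half_phase'' \<beta> x \<le> x * cubic \<beta> (x\<^sup>2) / S ^ 3"
      using cubic x sqrt_le by (intro half_phase''_le[OF \<beta>(2)]) auto
    also have "\<dots> \<le> x * (- \<delta> * (r\<^sup>2 - x\<^sup>2)) / S ^ 3"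
      using cubic x S by (intro divide_right_mono mult_left_mono) auto
    also have "\<dots> = - (\<gamma> * (x * (r\<^sup>2 - x\<^sup>2)))" by (simp add: \<gamma> divide_inverse algebra_simps)
    finally show ?thesis by simp
  qed
  show "\<gamma> * (x * (x\<^sup>2 - r\<^sup>2)) \<le> half_phase'' \<beta> x" if "r \<le> x"
  proof -
    have "r\<^sup>2 \<le> x\<^sup>2" using that r by (intro power_mono) auto
    then have "\<delta> * (x\<^sup>2 - r\<^sup>2) \<le> cubic \<beta> (x\<^sup>2) - cubic \<beta> (r\<^sup>2)" "0 \<le> \<delta> * (x\<^sup>2 - r\<^sup>2)"
      unfolding \<delta>_def using cubic_increment \<delta> \<delta>_def by auto
    then have cubic: "\<delta> * (x\<^sup>2 - r\<^sup>2) \<le> cubic \<beta> (x\<^sup>2)" "0 \<le> \<delta> * (x\<^sup>2 - r\<^sup>2)"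
      using r by auto
    have "x * (\<delta> * (x\<^sup>2 - r\<^sup>2)) / S ^ 3 \<le> x * cubic \<beta> (x\<^sup>2) / S ^ 3"
      using cubic x S by (intro divide_right_mono mult_left_mono) auto
    also have "\<dots> \<le> half_phase'' \<beta> x"
      using cubic x sqrt_le by (intro half_phase''_ge[OF \<beta>(2)]) auto
    finally show ?thesis by (simp add: \<gamma> divide_inverse algebra_simps)
  qed
qed

lemma square_difference_bounds:
  fixes r x :: real
  assumes "0 < r" "0 \<le> x"
  shows "x \<le> r / 2 \<Longrightarrow> r\<^sup>2 / 2 * x \<le> x * (r\<^sup>2 - x\<^sup>2)"
    and "r / 2 \<le> x \<Longrightarrow> x \<le> r \<Longrightarrow> r\<^sup>2 / 2 * (r - x) \<le> x * (r\<^sup>2 - x\<^sup>2)"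
    and "r \<le> x \<Longrightarrow> r\<^sup>2 / 2 * (x - r) \<le> x * (x\<^sup>2 - r\<^sup>2)"
proof -
  show "r\<^sup>2 / 2 * x \<le> x * (r\<^sup>2 - x\<^sup>2)" if "x \<le> r / 2"
  proof -
    have "x\<^sup>2 \<le> (r / 2)\<^sup>2" using that assms by (intro power_mono) auto
    then have "x\<^sup>2 \<le> r\<^sup>2 / 4" by (simp add: power_divide)
    moreover have "0 \<le> x\<^sup>2" by simp
    ultimately have "r\<^sup>2 / 2 \<le> r\<^sup>2 - x\<^sup>2" by linarith
    from mult_left_mono[OF this assms(2)] show ?thesis by (simp add: mult.commute)
  qed
  show "r\<^sup>2 / 2 * (r - x) \<le> x * (r\<^sup>2 - x\<^sup>2)" if "r / 2 \<le> x" "x \<le> r"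
  proof -
    have "r / 2 * r \<le> x * (r + x)" using that assms by (intro mult_mono) auto
    then have "r\<^sup>2 / 2 * (r - x) \<le> x * (r + x) * (r - x)"
      using that by (intro mult_right_mono) (auto simp: power2_eq_square)
    then show ?thesis by (simp add: power2_eq_square algebra_simps)
  qed
  show "r\<^sup>2 / 2 * (x - r) \<le> x * (x\<^sup>2 - r\<^sup>2)" if "r \<le> x"
  proof -
    have "r * r \<le> x * (x + r)" using that assms by (intro mult_mono) auto
    moreover have "0 \<le> r * r" by simp
    ultimately have "r\<^sup>2 / 2 \<le> x * (x + r)" unfolding power2_eq_square by linarith
    then have "r\<^sup>2 / 2 * (x - r) \<le> x * (x + r) * (x - r)"
      using that by (intro mult_right_mono) auto
    then show ?thesis by (simp add: power2_eq_square algebra_simps)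
  qed
qed

lemma half_phase''_piecewise_bounds:
  assumes \<beta>: "0 < \<beta>" "\<beta> < 2" and r: "cubic \<beta> (r\<^sup>2) = 0" "0 < r" "r < 2"
  obtains m where "0 < m"
    "\<And>x. 0 \<le> x \<Longrightarrow> x \<le> r / 2 \<Longrightarrow> m * (x - 0) ^ 1 \<le> - half_phase'' \<beta> x"
    "\<And>x. r / 2 \<le> x \<Longrightarrow> x \<le> r \<Longrightarrow> m * (r - x) ^ 1 \<le> - half_phase'' \<beta> x"
    "\<And>x. r \<le> x \<Longrightarrow> x \<le> 2 \<Longrightarrow> m * (x - r) ^ 1 \<le> half_phase'' \<beta> x"
proof -
  define \<gamma> where "\<gamma> = (10 - 5 * \<beta>\<^sup>2 / 2) / (5 * (1 + \<bar>\<beta>\<bar>)) ^ 3"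
  have "\<beta>\<^sup>2 < 4" using \<beta> mult_strict_mono[of \<beta> 2 \<beta> 2] by (simp add: power2_eq_square)
  then have \<gamma>: "0 < \<gamma>" unfolding \<gamma>_def by (simp add: add_pos_nonneg)
  note near = half_phase''_near_root[OF \<beta> r(1) less_imp_le[OF r(2)], folded \<gamma>_def]
  note poly = square_difference_bounds[OF r(2)]
  show ?thesis
  proof (rule that[of "\<gamma> * (r\<^sup>2 / 2)"])
    show "0 < \<gamma> * (r\<^sup>2 / 2)" using \<gamma> r by simp
    show "\<gamma> * (r\<^sup>2 / 2) * (x - 0) ^ 1 \<le> - half_phase'' \<beta> x" if "0 \<le> x" "x \<le> r / 2" for x
    proof -
      have "\<gamma> * (r\<^sup>2 / 2 * x) \<le> \<gamma> * (x * (r\<^sup>2 - x\<^sup>2))"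
        using poly(1)[OF that] \<gamma> by (intro mult_left_mono) auto
      also have "\<dots> \<le> - half_phase'' \<beta> x" using near(1)[of x] that r by simp
      finally show ?thesis by (simp add: mult.assoc)
    qed
    show "\<gamma> * (r\<^sup>2 / 2) * (r - x) ^ 1 \<le> - half_phase'' \<beta> x" if "r / 2 \<le> x" "x \<le> r" for x
    proof -
      have "\<gamma> * (r\<^sup>2 / 2 * (r - x)) \<le> \<gamma> * (x * (r\<^sup>2 - x\<^sup>2))"
        using poly(2)[OF _ that] that r \<gamma> by (intro mult_left_mono) auto
      also have "\<dots> \<le> - half_phase'' \<beta> x" using near(1)[of x] that r by simp
      finally show ?thesis by (simp add: mult.assoc)
    qed
    show "\<gamma> * (r\<^sup>2 / 2) * (x - r) ^ 1 \<le> half_phase'' \<beta> x" if "r \<le> x" "x \<le> 2" for x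
    proof -
      have "\<gamma> * (r\<^sup>2 / 2 * (x - r)) \<le> \<gamma> * (x * (x\<^sup>2 - r\<^sup>2))"
        using poly(3)[OF _ that(1)] that r \<gamma> by (intro mult_left_mono) auto
      also have "\<dots> \<le> half_phase'' \<beta> x" using near(2)[of x] that r by simp
      finally show ?thesis by (simp add: mult.assoc)
    qed
  qed
qed

lemma half_integral_decay_pos:
  assumes \<beta>: "0 < \<beta>" "\<beta> < 2"
  shows "half_integral_decay \<beta> (\<lambda>t. t powr (- 1 / 3))"
proof -
  obtain y\<^sub>0 where y\<^sub>0: "0 < y\<^sub>0" "y\<^sub>0 < 4" "cubic \<beta> y\<^sub>0 = 0" using cubic_root[OF \<beta>] .
  define r where "r = sqrt y\<^sub>0"
  have r: "0 < r" "r < 2" "cubic \<beta> (r\<^sup>2) = 0"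
    unfolding r_def using y\<^sub>0 real_sqrt_less_mono[of y\<^sub>0 4] by auto
  obtain m where m: "0 < m"
    and lb1: "\<And>x. 0 \<le> x \<Longrightarrow> x \<le> r / 2 \<Longrightarrow> m * (x - 0) ^ 1 \<le> - half_phase'' \<beta> x"
    and lb2: "\<And>x. r / 2 \<le> x \<Longrightarrow> x \<le> r \<Longrightarrow> m * (r - x) ^ 1 \<le> - half_phase'' \<beta> x"
    and lb3: "\<And>x. r \<le> x \<Longrightarrow> x \<le> 2 \<Longrightarrow> m * (x - r) ^ 1 \<le> half_phase'' \<beta> x"
    using half_phase''_piecewise_bounds[OF \<beta> r(3,1,2)] by blast
  define V where "V = vdc_const (m / 2) 2"
  define C where "C = 3 * V + vdc_const (1 / (16 * (1 + \<bar>\<beta>\<bar>) ^ 3)) 2"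
  show ?thesis unfolding half_integral_decay_def
  proof (intro exI[of _ C] conjI allI impI)
    show "0 < C" unfolding C_def V_def using vdc_const_pos by (simp add: add_pos_pos)
    fix t c B :: real assume t: "0 < t" and B: "0 \<le> B"
    let ?f = "\<lambda>x. cis (t * (half_phase \<beta> x + c * x))"
    note d = half_phase_has_derivative[OF \<beta>(2)] half_phase'_has_derivative[OF \<beta>(2)]
    have "V * t powr (- 1 / 3) \<ge> 0" unfolding V_def using vdc_const_pos[of "m / 2" 2] by simp
    have to_V: "X \<le> V * t powr (- 1 / 3)"
      if "X \<le> vdc_const (m / real (Suc 1)) (Suc 1) * t powr (- 1 / real (Suc 1 + 1))" for X
      using that unfolding V_def by (simp add: numeral_2_eq_2)
    have piece1: "norm (integral {0..b} ?f) \<le> V * t powr (- 1 / 3)" if "0 \<le> b" "b \<le> r / 2" for b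
      by (rule to_V, rule van_der_corput_second_derivative_le[OF d that(1) m t]) (use lb1 that in auto)
    have piece2: "norm (integral {r / 2..b} ?f) \<le> V * t powr (- 1 / 3)" if "r / 2 \<le> b" "b \<le> r" for b
      by (rule to_V, rule van_der_corput_second_derivative_le_right[OF d that m t]) (use lb2 that in auto)
    have piece3: "norm (integral {r..b} ?f) \<le> V * t powr (- 1 / 3)" if "r \<le> b" "b \<le> 2" for b
      by (rule to_V, rule van_der_corput_second_derivative_ge[OF d that(1) m t]) (use lb3 that in auto)
    have two_pieces: "norm (integral {0..b} ?f) \<le> V * t powr (- 1 / 3) + V * t powr (- 1 / 3)"
      if "0 \<le> b" "b \<le> r" for b
      using norm_integral_le_split[OF half_integrand_integrable _ _ piece1 piece2 that] r
        \<open>V * t powr (- 1 / 3) \<ge> 0\<close> by simp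
    have "norm (integral {0..b} ?f) \<le> 3 * V * t powr (- 1 / 3)" if "0 \<le> b" "b \<le> 2" for b
      using norm_integral_le_split[OF half_integrand_integrable _ _ two_pieces piece3 that] r
        \<open>V * t powr (- 1 / 3) \<ge> 0\<close> by simp
    then have "norm (integral {0..B} ?f)
        \<le> 3 * V * t powr (- 1 / 3) + vdc_const (1 / (16 * (1 + \<bar>\<beta>\<bar>) ^ 3)) 2 * t powr (- 1 / 3)"
      by (rule half_integral_le_with_tail[OF \<beta>(2) t B])
    then show "norm (integral {0..B} ?f) \<le> C * t powr (- 1 / 3)"
      unfolding C_def by (simp add: algebra_simps)
  qed
qed

lemma phase_integral_decay:
  assumes \<beta>: "\<beta> < 2" and decay: "half_integral_decay \<beta> \<kappa>"
  shows "\<exists>C>0. \<forall>t>0. \<forall>\<alpha>. \<exists>I. has_improper_integral_R (\<lambda>\<xi>. cis (t * phase \<beta> \<xi> \<alpha>)) I \<and> norm I \<le> C * \<kappa> t"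
proof -
  obtain C where "0 < C" and bound: "\<And>t c B. 0 < t \<Longrightarrow> 0 \<le> B \<Longrightarrow>
      norm (integral {0..B} (\<lambda>x. cis (t * (half_phase \<beta> x + c * x)))) \<le> C * \<kappa> t"
    using decay unfolding half_integral_decay_def by blast
  show ?thesis
  proof (intro exI[of _ "2 * C"] conjI allI impI)
    show "0 < 2 * C" using \<open>0 < C\<close> by simp
    show "\<exists>I. has_improper_integral_R (\<lambda>\<xi>. cis (t * phase \<beta> \<xi> \<alpha>)) I \<and> norm I \<le> 2 * C * \<kappa> t"
      if "0 < t" for t \<alpha>
      using phase_improper_integral_bound[OF \<beta> that bound[OF that]] by (simp add: mult.assoc)
  qed
qed

theorem mainTheorem9:
  fixes \<beta> :: real
  assumes "\<beta> < 2"
  shows "(\<beta> \<noteq> 0 \<longrightarrow> (\<exists>C>0. \<forall>t>0. \<forall>\<alpha>. \<exists>I.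
            has_improper_integral_R (\<lambda>\<xi>. cis (t * phase \<beta> \<xi> \<alpha>)) I \<and>
            norm I \<le> C * t powr (-1/3)))
       \<and> (\<beta> = 0 \<longrightarrow> (\<exists>C>0. \<forall>t>0. \<forall>\<alpha>. \<exists>I.
            has_improper_integral_R (\<lambda>\<xi>. cis (t * phase \<beta> \<xi> \<alpha>)) I \<and>
            norm I \<le> C * (t powr (-1/3) + t powr (-1/5))))"
proof (intro conjI impI)
  assume "\<beta> \<noteq> 0"
  then have "half_integral_decay \<beta> (\<lambda>t. t powr (- 1 / 3))"
    using half_integral_decay_neg half_integral_decay_pos assms by (cases "\<beta> < 0") auto
  from phase_integral_decay[OF assms this]
  show "\<exists>C>0. \<forall>t>0. \<forall>\<alpha>. \<exists>I. has_improper_integral_R (\<lambda>\<xi>. cis (t * phase \<beta> \<xi> \<alpha>)) I \<and>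
      norm I \<le> C * t powr (-1/3)" by simp
next
  assume "\<beta> = 0"
  with phase_integral_decay[OF assms, of "\<lambda>t. t powr (- 1 / 3) + t powr (- 1 / 5)"] half_integral_decay_zero
  show "\<exists>C>0. \<forall>t>0. \<forall>\<alpha>. \<exists>I. has_improper_integral_R (\<lambda>\<xi>. cis (t * phase \<beta> \<xi> \<alpha>)) I \<and>
      norm I \<le> C * (t powr (-1/3) + t powr (-1/5))" by simp
qed

end
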